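(* Let $\tilde Q\subseteq\mathfrak P$ be an independent set, let $\tilde S\subseteq\mathfrak P$, let $(a,b)$ with $a,b\in\mathcal G(\tilde Q)$ be a conjugal pair in relation to $\tilde S$, and let $o$ be a Pauli operator with $o\in G_{\tilde Q}(a)\cup G_{\tilde Q}(b)$. Then there exists a pair $(c,d)$ such that (1) $c,d\in\mathcal G(\tilde Q)$; (2) $o\in G_{\tilde Q}(c)$; (3) $o\notin G_{\tilde Q}(d)$; (4) $(c,d)$ is a conjugal pair in relation to $(\tilde S\setminus\{a,b\})\cup\{c,d\}$; and (5) $\mathcal G(\{c,d\})=\mathcal G(\{a,b\})$.
   Context: $\mathfrak P$ is the group of $N$-qubit Pauli operators modulo phases; $\mathcal G(T)$ is the set of all products of elements of $T$. A set is independent if no element is a product of other elements of the set. For an independent set $\tilde Q$ and $q\in\mathcal G(\tilde Q)$, $G_{\tilde Q}(q)\subseteq\tilde Q$ is the unique subset whose product equals $q$. A pair $(a,b)$ is a conjugal pair in relation to a set $X$ if each of $a,b$ commutes with every operator in $X$ except its partner (the other member of the pair), should the partner lie in $X$. *)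

theory Defs
  imports Main "HOL-Library.Function_Algebras"
begin

text \<open>Single-qubit Pauli operators modulo phases, with the multiplication table
  of the Pauli group modulo phases (identity, X, Y, Z).\<close>

datatype pauli1 = PI | PX | PY | PZ

fun mult1 :: "pauli1 \<Rightarrow> pauli1 \<Rightarrow> pauli1" where
  "mult1 PI q = q"
| "mult1 p PI = p"
| "mult1 PX PX = PI" | "mult1 PY PY = PI" | "mult1 PZ PZ = PI"
| "mult1 PX PY = PZ" | "mult1 PY PX = PZ"
| "mult1 PX PZ = PY" | "mult1 PZ PX = PY"
| "mult1 PY PZ = PX" | "mult1 PZ PY = PX"

instantiation pauli1 :: comm_monoid_mult
begin
definition one_pauli1_def: "1 = PI"
definition times_pauli1_def: "p * q = mult1 p q"
instance
proof
  fix a b c :: pauli1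
  show "a * b * c = a * (b * c)" unfolding times_pauli1_def
    by (cases a; cases b; cases c) simp_all
  show "a * b = b * a" unfolding times_pauli1_def
    by (cases a; cases b) simp_all
  show "1 * a = a" unfolding times_pauli1_def one_pauli1_def by simp
qed
end

definition anticomm1 :: "pauli1 \<Rightarrow> pauli1 \<Rightarrow> bool" where
  "anticomm1 p q \<longleftrightarrow> p \<noteq> PI \<and> q \<noteq> PI \<and> p \<noteq> q"

text \<open>An N-qubit Pauli operator modulo phases: a function from qubit indices to
  single-qubit Paulis, equal to the identity outside the qubits 0..N-1.
  The product is pointwise (instance from Function_Algebras).\<close>
type_synonym pauli = "nat \<Rightarrow> pauli1"

definition pauli_ops :: "nat \<Rightarrow> pauli set" where
  "pauli_ops N = {p. \<forall>i\<ge>N. p i = PI}"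

definition commutes :: "nat \<Rightarrow> pauli \<Rightarrow> pauli \<Rightarrow> bool" where
  "commutes N p q \<longleftrightarrow> even (card {i. i < N \<and> anticomm1 (p i) (q i)})"

definition gen :: "pauli set \<Rightarrow> pauli set" where
  "gen T = {\<Prod>F | F. finite F \<and> F \<subseteq> T}"

definition independent :: "pauli set \<Rightarrow> bool" where
  "independent T \<longleftrightarrow> (\<forall>t\<in>T. t \<notin> gen (T - {t}))"

definition decomp :: "pauli set \<Rightarrow> pauli \<Rightarrow> pauli set" where
  "decomp Q q = (THE F. finite F \<and> F \<subseteq> Q \<and> \<Prod>F = q)"

definition conjugal :: "nat \<Rightarrow> pauli \<Rightarrow> pauli \<Rightarrow> pauli set \<Rightarrow> bool" where
  "conjugal N a b X \<longleftrightarrow> (\<forall>x\<in>X. x \<noteq> b \<longrightarrow> commutes N a x) \<and> (\<forall>x\<in>X. x \<noteq> a \<longrightarrow> commutes N b x)"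

end

theory Submission
  imports Defs
begin

text \<open>Modulo phases the Pauli operators form an elementary abelian 2-group, so a product over
  an independent set determines the set, and multiplying two products yields the product over
  the symmetric difference of the factor sets. If the generator \<open>p\<close> occurs in the decompositions
  of both \<open>a\<close> and \<open>b\<close>, the pair \<open>(a, a b)\<close> separates it: \<open>a b\<close> commutes with everything
  both \<open>a\<close> and \<open>b\<close> commute with, and \<open>{a, a b}\<close> generates the same group as \<open>{a, b}\<close>.\<close>

lemma pauli_mult_self [simp]: "(x::pauli) * x = 1"
proof
  fix i show "(x * x) i = (1::pauli) i"
    by (cases "x i") (simp_all add: times_fun_def one_fun_def times_pauli1_def one_pauli1_def)
qed

lemma pauli_mult_cancel_left [simp]: "(x::pauli) * (x * y) = y"
  by (simp add: mult.assoc[symmetric])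

lemma prod_mult_prod_sym_diff:
  fixes F G :: "'a::comm_monoid_mult set"
  assumes involutive: "\<And>x::'a. x * x = 1" and "finite F" "finite G"
  shows "\<Prod>F * \<Prod>G = \<Prod>(sym_diff F G)"
proof -
  have sq: "\<Prod>(F \<inter> G) * \<Prod>(F \<inter> G) = 1"
    by (simp add: prod.distrib[symmetric] involutive)
  have "\<Prod>F = \<Prod>(F - G) * \<Prod>(F \<inter> G)"
    using assms prod.subset_diff[of "F \<inter> G" F "\<lambda>x. x"] by (simp add: Diff_Int2 inf.commute Diff_Int)
  moreover have "\<Prod>G = \<Prod>(G - F) * \<Prod>(F \<inter> G)"
    using assms prod.subset_diff[of "F \<inter> G" G "\<lambda>x. x"] by (simp add: Diff_Int2 Diff_Int)
  ultimately have "\<Prod>F * \<Prod>G = \<Prod>(F - G) * \<Prod>(G - F) * (\<Prod>(F \<inter> G) * \<Prod>(F \<inter> G))"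
    by (simp add: ac_simps)
  also have "\<dots> = \<Prod>(sym_diff F G)"
    using assms by (simp add: sq prod.union_disjoint Diff_Int_distrib2)
  finally show ?thesis .
qed

lemma pauli_prod_mult_prod:
  "finite F \<Longrightarrow> finite G \<Longrightarrow> \<Prod>F * \<Prod>G = (\<Prod>(sym_diff F G) :: pauli)"
  by (rule prod_mult_prod_sym_diff) simp_all

lemma independent_prod_inject:
  assumes ind: "independent Q" and F: "finite F" "F \<subseteq> Q" and G: "finite G" "G \<subseteq> Q"
    and eq: "\<Prod>F = (\<Prod>G :: pauli)"
  shows "F = G"
proof (rule ccontr)
  define H where "H = sym_diff F G"
  assume "F \<noteq> G"
  then obtain t where t: "t \<in> H" unfolding H_def by blast
  have H: "finite H" "H \<subseteq> Q" using F G unfolding H_def by auto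
  have "\<Prod>H = (1::pauli)"
    using pauli_prod_mult_prod[OF F(1) G(1)] eq unfolding H_def by simp
  then have "t * \<Prod>(H - {t}) = 1" using H t by (simp add: prod.remove)
  then have "t = \<Prod>(H - {t})" by (metis pauli_mult_cancel_left mult_1_right)
  moreover have "\<Prod>(H - {t}) \<in> gen (Q - {t})" unfolding gen_def using H by blast
  ultimately show False using ind t H unfolding independent_def by auto
qed

lemma decomp_prod:
  assumes "independent Q" "finite F" "F \<subseteq> Q"
  shows "decomp Q (\<Prod>F) = F"
  unfolding decomp_def
  by (rule the_equality) (use assms independent_prod_inject in auto)

lemma gen_mult_decomp:
  assumes "independent Q" "a \<in> gen Q" "b \<in> gen Q"
  shows "a * b \<in> gen Q" "decomp Q (a * b) = sym_diff (decomp Q a) (decomp Q b)"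
proof -
  obtain F where F: "finite F" "F \<subseteq> Q" "a = \<Prod>F" using assms(2) unfolding gen_def by auto
  obtain G where G: "finite G" "G \<subseteq> Q" "b = \<Prod>G" using assms(3) unfolding gen_def by auto
  have ab: "a * b = \<Prod>(sym_diff F G)" using F G pauli_prod_mult_prod by simp
  show "a * b \<in> gen Q" unfolding ab gen_def using F G by blast
  have "decomp Q a = F" "decomp Q b = G" using F G assms(1) decomp_prod by auto
  moreover have "decomp Q (a * b) = sym_diff F G"
    unfolding ab by (rule decomp_prod) (use F G assms(1) in auto)
  ultimately show "decomp Q (a * b) = sym_diff (decomp Q a) (decomp Q b)" by simp
qed

lemma gen_pair: "gen {x, y} = {1, x, y, x * (y::pauli)}"
proof
  show "gen {x, y} \<subseteq> {1, x, y, x * y}"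
  proof
    fix z assume "z \<in> gen {x, y}"
    then obtain F where F: "F \<subseteq> {x, y}" "z = \<Prod>F" unfolding gen_def by auto
    then consider "F = {}" | "F = {x}" | "F = {y}" | "F = {x, y}" by blast
    then show "z \<in> {1, x, y, x * y}"
    proof cases
      case 4
      then show ?thesis using F by (cases "x = y") simp_all
    qed (use F in simp_all)
  qed
next
  have "\<Prod>{} \<in> gen {x, y}" "\<Prod>{x} \<in> gen {x, y}" "\<Prod>{y} \<in> gen {x, y}" "\<Prod>{x, y} \<in> gen {x, y}"
    unfolding gen_def by blast+
  then show "{1, x, y, x * y} \<subseteq> gen {x, y}" by (cases "x = y") auto
qed

lemma gen_pair_mult: "gen {a, a * b} = gen {a, b::pauli}"
  unfolding gen_pair by auto

lemma card_sym_diff: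
  assumes "finite A" "finite B"
  shows "card (sym_diff A B) + 2 * card (A \<inter> B) = card A + card B"
proof -
  have "card (A \<union> B) = card (sym_diff A B) + card (A \<inter> B)"
    using assms by (subst card_Un_disjoint[symmetric]) (auto intro: arg_cong[where f = card])
  then show ?thesis using card_Un_Int[OF assms] by simp
qed

lemma even_card_sym_diff:
  "finite A \<Longrightarrow> finite B \<Longrightarrow> even (card (sym_diff A B)) \<longleftrightarrow> (even (card A) \<longleftrightarrow> even (card B))"
  by (drule (1) card_sym_diff) presburger

lemma anticomm1_mult: "anticomm1 (p * q) r \<longleftrightarrow> anticomm1 p r \<noteq> anticomm1 q r"
  by (cases p; cases q; cases r) (simp_all add: anticomm1_def times_pauli1_def)

lemma commutes_self [simp]: "commutes N x x"
  unfolding commutes_def anticomm1_def by simp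

lemma commutes_mult_left: "commutes N (a * b) x \<longleftrightarrow> (commutes N a x \<longleftrightarrow> commutes N b x)"
proof -
  let ?A = "\<lambda>p. {i. i < N \<and> anticomm1 (p i) (x i)}"
  have "?A (a * b) = sym_diff (?A a) (?A b)"
    by (auto simp: times_fun_def anticomm1_mult)
  then show ?thesis unfolding commutes_def by (simp add: even_card_sym_diff)
qed

lemma conjugal_sym: "conjugal N a b S \<longleftrightarrow> conjugal N b a S"
  unfolding conjugal_def by blast

lemma conjugal_Un_partners: "conjugal N a b (S \<union> {a, b}) \<longleftrightarrow> conjugal N a b S"
  unfolding conjugal_def by auto

lemma conjugal_mult_partner:
  "conjugal N a b S \<Longrightarrow> conjugal N a (a * b) (S - {a, b})"
  unfolding conjugal_def by (auto simp: commutes_mult_left)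

lemma conjugal_pair_separating_left:
  assumes ind: "independent Q" and ab: "a \<in> gen Q" "b \<in> gen Q"
    and cj: "conjugal N a b S" and pa: "p \<in> decomp Q a"
  shows "\<exists>c d. c \<in> gen Q \<and> d \<in> gen Q \<and> p \<in> decomp Q c \<and> p \<notin> decomp Q d
           \<and> conjugal N c d ((S - {a, b}) \<union> {c, d}) \<and> gen {c, d} = gen {a, b}"
proof (cases "p \<in> decomp Q b")
  case False
  have "conjugal N a b ((S - {a, b}) \<union> {a, b})"
    using cj conjugal_Un_partners[of N a b S] by (metis Un_Diff_cancel2)
  with ab pa False show ?thesis by (intro exI[of _ a] exI[of _ b]) blast
next
  case True
  have "a * b \<in> gen Q" "p \<notin> decomp Q (a * b)"
    using gen_mult_decomp[OF ind ab] pa True by simp_all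
  moreover have "conjugal N a (a * b) ((S - {a, b}) \<union> {a, a * b})"
    using conjugal_mult_partner[OF cj] conjugal_Un_partners by blast
  ultimately show ?thesis
    using ab pa gen_pair_mult[of a b] by (intro exI[of _ a] exI[of _ "a * b"]) blast
qed

theorem lemma4:
  fixes N :: nat and Q S :: "pauli set" and a b p :: pauli
  assumes "Q \<subseteq> pauli_ops N" and "independent Q"
    and "S \<subseteq> pauli_ops N"
    and "a \<in> gen Q" and "b \<in> gen Q"
    and "conjugal N a b S"
    and "p \<in> pauli_ops N"
    and "p \<in> decomp Q a \<union> decomp Q b"
  shows "\<exists>c d. c \<in> gen Q \<and> d \<in> gen Q \<and> p \<in> decomp Q c \<and> p \<notin> decomp Q d
           \<and> conjugal N c d ((S - {a, b}) \<union> {c, d}) \<and> gen {c, d} = gen {a, b}"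
proof (cases "p \<in> decomp Q a")
  case True
  then show ?thesis using conjugal_pair_separating_left assms by blast
next
  case False
  then have "p \<in> decomp Q b" using assms(8) by blast
  moreover have "conjugal N b a S" using assms(6) conjugal_sym by blast
  ultimately show ?thesis
    using conjugal_pair_separating_left[OF assms(2,5,4)] by (simp add: insert_commute)
qed

end
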